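(* Let $V=\{n\in\mathbb{Z} : n\geq 2,\ 5\nmid n\}$ and let $\Gamma_5$ be the directed graph with vertex set $V$ whose edges are the up-edges $(n,(n+5)^2)$ for $n\in V$ and the down-edges $(n^2,n)$ for $n\in V$. Then $\Gamma_5$ is connected: for any $x,y\in V$ there is a directed path in $\Gamma_5$ from $x$ to $y$.
   Context: A directed path from $x$ to $y$ is a finite sequence of vertices $x=v_0,v_1,\dots,v_m=y$ such that each $(v_{j-1},v_j)$ is an edge of $\Gamma_5$. *)

theory Defs
  imports Main
begin

definition V5 :: "int set" where
  "V5 = {n. n \<ge> 2 \<and> \<not> (5 dvd n)}"

definition edge5 :: "int \<Rightarrow> int \<Rightarrow> bool" where
  "edge5 a b \<longleftrightarrow> (a \<in> V5 \<and> b = (a + 5)^2) \<or> (b \<in> V5 \<and> a = b^2)"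

definition dpath5 :: "int list \<Rightarrow> int \<Rightarrow> int \<Rightarrow> bool" where
  "dpath5 vs x y \<longleftrightarrow> vs \<noteq> [] \<and> hd vs = x \<and> last vs = y \<and>
     (\<forall>j. Suc j < length vs \<longrightarrow> edge5 (vs ! j) (vs ! Suc j))"

end

theory Submission
  imports Defs
begin

text \<open>An up-edge followed by a down-edge gives a path a, (a+5)^2, a+5, so every
  vertex reaches all larger vertices of its residue class mod 5. In the class of 1 one can also
  descend: t+5 reaches t^2 (which is \<equiv> t and \<ge> t+5) and then steps down to t; hence every
  vertex \<equiv> 1 reaches 6. Two up-edges lead from any x to a vertex \<equiv> x^4 \<equiv> 1, so every vertex
  reaches 6. Conversely 6 reaches y^2 \<equiv> 1 or 4 (the class of 4 through 6, 16, 4), and y^2 steps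
  down to y.\<close>

abbreviation reach5 :: "int \<Rightarrow> int \<Rightarrow> bool" where
  "reach5 \<equiv> edge5\<^sup>*\<^sup>*"

lemma reach5_imp_dpath5: "reach5 x y \<Longrightarrow> \<exists>vs. dpath5 vs x y"
proof (induction rule: converse_rtranclp_induct)
  case base
  have "dpath5 [y] y y" by (simp add: dpath5_def)
  then show ?case by blast
next
  case (step x z)
  then obtain vs where vs: "dpath5 vs z y" by blast
  have "dpath5 (x # vs) x y"
    unfolding dpath5_def
  proof (intro conjI allI impI)
    fix j assume j: "Suc j < length (x # vs)"
    show "edge5 ((x # vs) ! j) ((x # vs) ! Suc j)"
    proof (cases j)
      case 0
      then show ?thesis using vs step(1) by (cases vs) (auto simp: dpath5_def)
    next
      case (Suc i)
      then show ?thesis using vs j by (auto simp: dpath5_def)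
    qed
  qed (use vs in \<open>auto simp: dpath5_def\<close>)
  then show ?case by blast
qed

lemma power2_mod5: "\<not> 5 dvd (a::int) \<Longrightarrow> a\<^sup>2 mod 5 = 1 \<or> a\<^sup>2 mod 5 = 4"
proof -
  assume "\<not> 5 dvd a"
  then have "a mod 5 \<noteq> 0" by (simp add: dvd_eq_mod_eq_0)
  then have "a mod 5 \<in> {1, 2, 3, 4}" by auto
  moreover have "a\<^sup>2 mod 5 = (a mod 5)\<^sup>2 mod 5" by (simp add: power_mod)
  ultimately show ?thesis by auto
qed

lemma power4_mod5: "\<not> 5 dvd (a::int) \<Longrightarrow> a ^ 4 mod 5 = 1"
proof -
  assume "\<not> 5 dvd a"
  then have "a mod 5 \<noteq> 0" by (simp add: dvd_eq_mod_eq_0)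
  then have "a mod 5 \<in> {1, 2, 3, 4}" by auto
  moreover have "a ^ 4 mod 5 = (a mod 5) ^ 4 mod 5" by (simp add: power_mod)
  ultimately show ?thesis by auto
qed

lemma V5_add5: "a \<in> V5 \<Longrightarrow> a + 5 \<in> V5"
  by (auto simp: V5_def)

lemma V5_power2: "a \<in> V5 \<Longrightarrow> a\<^sup>2 \<in> V5"
proof -
  assume "a \<in> V5"
  then have "a \<ge> 2" "\<not> 5 dvd a" by (auto simp: V5_def)
  then have "a \<le> a\<^sup>2" "\<not> 5 dvd a\<^sup>2"
    using power2_mod5[of a] by (auto simp: power2_eq_square dvd_eq_mod_eq_0)
  with \<open>a \<ge> 2\<close> show ?thesis by (simp add: V5_def)
qed

lemma reach5_up: "a \<in> V5 \<Longrightarrow> reach5 a ((a + 5)\<^sup>2)"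
  by (auto simp: edge5_def)

lemma reach5_down: "t \<in> V5 \<Longrightarrow> reach5 (t\<^sup>2) t"
  by (auto simp: edge5_def)

lemma reach5_add5: "a \<in> V5 \<Longrightarrow> reach5 a (a + 5)"
  using reach5_up reach5_down V5_add5 rtranclp_trans by metis

lemma reach5_add_multiple5: "a \<in> V5 \<Longrightarrow> reach5 a (a + 5 * int k)"
proof (induction k)
  case 0
  then show ?case by simp
next
  case (Suc k)
  have "a + 5 * int k \<in> V5"
    using Suc.prems by (auto simp: V5_def dvd_add_left_iff)
  then have "reach5 (a + 5 * int k) (a + 5 * int k + 5)"
    using reach5_add5 by blast
  then have "reach5 (a + 5 * int k) (a + 5 * int (Suc k))"
    by (simp add: algebra_simps)
  with Suc show ?case by (meson rtranclp_trans)
qed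

lemma reach5_upwards:
  assumes "a \<in> V5" "a \<le> b" "a mod 5 = b mod 5"
  shows "reach5 a b"
proof -
  obtain m where "b - a = 5 * m"
    using assms(3) by (metis mod_eq_dvd_iff dvd_def)
  with assms(2) have "b = a + 5 * int (nat m)" by simp
  then show ?thesis using reach5_add_multiple5[OF assms(1)] by metis
qed

lemma reach5_sub5:
  assumes "t \<in> V5" "t mod 5 = 1"
  shows "reach5 (t + 5) t"
proof -
  have "t \<ge> 6" using assms by (simp add: V5_def) presburger
  then have "6 * t \<le> t * t" by (intro mult_right_mono) auto
  then have "t + 5 \<le> t\<^sup>2" using \<open>t \<ge> 6\<close> unfolding power2_eq_square by linarith
  moreover have "t\<^sup>2 mod 5 = (t mod 5)\<^sup>2 mod 5" by (simp add: power_mod)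
  then have "t\<^sup>2 mod 5 = 1" using assms(2) by simp
  ultimately have "reach5 (t + 5) (t\<^sup>2)"
    using assms reach5_upwards V5_add5 by simp
  then show ?thesis using reach5_down[OF assms(1)] by (meson rtranclp_trans)
qed

lemma reach5_6:
  assumes "n \<in> V5" "n mod 5 = 1"
  shows "reach5 n 6"
proof -
  have descent: "reach5 (6 + 5 * int k) 6" for k
  proof (induction k)
    case 0
    then show ?case by simp
  next
    case (Suc k)
    have "reach5 (6 + 5 * int (Suc k)) (6 + 5 * int k)"
      using reach5_sub5[of "6 + 5 * int k"] by (simp add: V5_def algebra_simps)
    with Suc.IH show ?case by (meson rtranclp_trans)
  qed
  have "n \<ge> 6" using assms by (simp add: V5_def) presburger
  with assms(2) have "n = 6 + 5 * ((n - 6) div 5)" "(n - 6) div 5 \<ge> 0" by presburger+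
  then have "n = 6 + 5 * int (nat ((n - 6) div 5))" by simp
  then show ?thesis using descent by metis
qed

lemma reach5_to_6: "x \<in> V5 \<Longrightarrow> reach5 x 6"
proof -
  assume x: "x \<in> V5"
  define z where "z = ((x + 5)\<^sup>2 + 5)\<^sup>2"
  have "reach5 x z"
    unfolding z_def using reach5_up x V5_add5 V5_power2 by (meson rtranclp_trans)
  moreover have "z \<in> V5"
    unfolding z_def using x V5_add5 V5_power2 by blast
  moreover have "z = x ^ 4 + 5 * ((2 * x + 6) * (2 * x\<^sup>2 + 5 * (2 * x + 6)))"
    unfolding z_def by algebra
  then have "z mod 5 = 1" using x power4_mod5 by (simp add: V5_def)
  ultimately show ?thesis using reach5_6 by (meson rtranclp_trans)
qed

lemma reach5_from_6: "y \<in> V5 \<Longrightarrow> reach5 6 y"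
proof -
  assume y: "y \<in> V5"
  then have "y \<ge> 2" by (simp add: V5_def)
  then have "y\<^sup>2 \<ge> 4" using power_mono[of 2 y 2] by simp
  have "y\<^sup>2 \<in> V5" using V5_power2 y .
  have V4: "4 \<in> V5" and V6: "6 \<in> V5" by (auto simp: V5_def)
  have "reach5 6 (y\<^sup>2)"
  proof (cases "y\<^sup>2 mod 5 = 1")
    case True
    with \<open>y\<^sup>2 \<ge> 4\<close> have "y\<^sup>2 \<ge> 6" by presburger
    with True show ?thesis using reach5_upwards[OF V6] by simp
  next
    case False
    then have "y\<^sup>2 mod 5 = 4" using power2_mod5 y by (auto simp: V5_def)
    have "reach5 6 (4\<^sup>2)" using reach5_upwards[OF V6] by simp
    then have "reach5 6 4" using reach5_down[OF V4] by (meson rtranclp_trans)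
    moreover have "reach5 4 (y\<^sup>2)"
      using reach5_upwards[OF V4] \<open>y\<^sup>2 \<ge> 4\<close> \<open>y\<^sup>2 mod 5 = 4\<close> by simp
    ultimately show ?thesis by (meson rtranclp_trans)
  qed
  then show ?thesis using reach5_down[OF y] by (meson rtranclp_trans)
qed

theorem theorem5:
  assumes "x \<in> V5" and "y \<in> V5"
  shows "\<exists>vs. dpath5 vs x y"
proof -
  have "reach5 x 6" using reach5_to_6[OF assms(1)] .
  moreover have "reach5 6 y" using reach5_from_6[OF assms(2)] .
  ultimately show ?thesis using reach5_imp_dpath5 rtranclp_trans by metis
qed

end
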